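(* Let $X$ be a Tychonoff space and let $\tau$ be the $P$-number of $X$. Suppose $X$ has a $\tau$-discrete basis of clopen sets, i.e. a base $\mathcal B=\bigcup_{\alpha<\tau}\mathcal B_\alpha$ for the topology of $X$ consisting of clopen sets, where each $\mathcal B_\alpha$ is a discrete family in $X$. Then $X$ is a generalized ordered space (GO-space).
   Context: All spaces are Tychonoff. The $P$-number of a space $X$ is $|X|$ if $X$ is discrete; otherwise it is the largest cardinal $\tau$ such that the intersection of any family of fewer than $\tau$ open subsets of $X$ is open (equivalently, the minimum cardinality of a family of open sets whose intersection is not open). A family of subsets of $X$ is discrete if every point of $X$ has a neighborhood meeting at most one member of the family. A linearly ordered topological space (LOTS) is a space whose topology is generated by the open intervals and open rays of some linear order; a GO-space (generalized ordered space) is a space homeomorphic to a subspace of a LOTS. *)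

theory Defs
  imports "HOL-Analysis.Analysis"
begin

definition Tychonoff_space :: "'a topology \<Rightarrow> bool" where
  "Tychonoff_space X \<longleftrightarrow> completely_regular_space X \<and> t1_space X"

definition bad_open_families :: "'a topology \<Rightarrow> 'a set set set" where
  "bad_open_families X =
     {F. (\<forall>U\<in>F. openin X U) \<and> \<not> openin X (topspace X \<inter> \<Inter>F)}"

text \<open>If X is discrete it is |X| (represented by the set of singletons of X);
  otherwise it is the minimal cardinality of a family of open sets whose
  intersection is not open.\<close>
definition P_number :: "'a topology \<Rightarrow> 'a set rel" where
  "P_number X =
     (if X = discrete_topology (topspace X)
      then card_of ((\<lambda>x. {x}) ` topspace X)
      else card_of (SOME F. F \<in> bad_open_families X \<and>
                     (\<forall>G\<in>bad_open_families X. (card_of F, card_of G) \<in> ordLeq)))"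

definition discrete_family :: "'a topology \<Rightarrow> 'a set set \<Rightarrow> bool" where
  "discrete_family X \<F> \<longleftrightarrow>
     (\<forall>x\<in>topspace X. \<exists>U. openin X U \<and> x \<in> U \<and>
        (\<forall>A\<in>\<F>. \<forall>B\<in>\<F>. A \<inter> U \<noteq> {} \<and> B \<inter> U \<noteq> {} \<longrightarrow> A = B))"

definition is_base :: "'a topology \<Rightarrow> 'a set set \<Rightarrow> bool" where
  "is_base X \<B> \<longleftrightarrow> (\<forall>B\<in>\<B>. openin X B) \<and>
     (\<forall>U x. openin X U \<and> x \<in> U \<longrightarrow> (\<exists>B\<in>\<B>. x \<in> B \<and> B \<subseteq> U))"

text \<open>The order topology on a set S linearly ordered by r (a reflexive linear
  order on S): generated by open intervals and open rays (and S itself, which is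
  open, so that the topspace is S also when S has at most one point).\<close>
definition order_topology_on :: "'b set \<Rightarrow> 'b rel \<Rightarrow> 'b topology" where
  "order_topology_on S r = topology_generated_by
     ({S} \<union> {{z\<in>S. (a,z) \<in> r \<and> a \<noteq> z} | a. a \<in> S}
          \<union> {{z\<in>S. (z,b) \<in> r \<and> z \<noteq> b} | b. b \<in> S}
          \<union> {{z\<in>S. (a,z) \<in> r \<and> a \<noteq> z \<and> (z,b) \<in> r \<and> z \<noteq> b} | a b. a \<in> S \<and> b \<in> S})"

definition LOTS :: "'b topology \<Rightarrow> bool" where
  "LOTS L \<longleftrightarrow> (\<exists>S r. linear_order_on S r \<and> L = order_topology_on S r)"

definition GO_space_in :: "'b itself \<Rightarrow> 'a topology \<Rightarrow> bool" where
  "GO_space_in _ X \<longleftrightarrow>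
     (\<exists>(L::'b topology) T. LOTS L \<and> T \<subseteq> topspace L \<and> X homeomorphic_space subtopology L T)"

text \<open>The ambient LOTS is taken
  with carrier in 'a \<times> int, which is no restriction (every GO-space embeds in a LOTS
  on a subset of X \<times> {-1,0,1}).\<close>
definition GO_space :: "'a topology \<Rightarrow> bool" where
  "GO_space X \<longleftrightarrow> GO_space_in TYPE('a \<times> int) X"

end

theory Submission
  imports Defs
begin

text \<open>
  Well-order the index set by its cardinal order, so that each proper initial segment
  has fewer than \<open>\<tau>\<close> elements.  Discreteness makes \<open>{B \<in> \<B> i. x \<in> B}\<close> (at most one set)
  a locally constant function of \<open>x\<close>, and the base separates points, so ordering \<open>X\<close>
  lexicographically by these codes (using any linear order on their values) is a linear
  order.  A block of points agreeing with \<open>x\<close> at all indices up to \<open>i\<close> is an intersection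
  of fewer than \<open>\<tau>\<close> open sets, hence open; blocks are order-convex, form a base, and
  every open ray is a union of blocks.  A space carrying a linear order with open rays and
  a base of convex open sets embeds into a LOTS built on \<open>X \<times> {-1, 0, 1}\<close>.
\<close>

unbundle cardinal_syntax

section \<open>Linear orders and order topologies\<close>

definition tag_lex :: "'a rel \<Rightarrow> ('a \<times> 'b::linorder) set \<Rightarrow> ('a \<times> 'b) rel" where
  "tag_lex R S = {(p, q). p \<in> S \<and> q \<in> S \<and>
     ((fst p, fst q) \<in> R \<and> fst p \<noteq> fst q \<or> fst p = fst q \<and> snd p \<le> snd q)}"

lemma linear_order_on_tag_lex:
  assumes "linear_order_on T R" and "fst ` S \<subseteq> T"
  shows "linear_order_on S (tag_lex R S)"
proof -
  from assms(1) have R: "trans R" "antisym R" "total_on T R"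
    unfolding order_on_defs by auto
  show ?thesis
    unfolding order_on_defs
  proof (intro conjI)
    show "tag_lex R S \<subseteq> S \<times> S" "refl_on S (tag_lex R S)"
      by (auto simp: tag_lex_def refl_on_def)
    show "antisym (tag_lex R S)"
      unfolding antisym_def
    proof (intro allI impI)
      fix p q assume pq: "(p, q) \<in> tag_lex R S" and qp: "(q, p) \<in> tag_lex R S"
      have "fst p = fst q"
      proof (rule ccontr)
        assume "fst p \<noteq> fst q"
        with pq qp have "(fst p, fst q) \<in> R" "(fst q, fst p) \<in> R"
          unfolding tag_lex_def by auto
        with \<open>fst p \<noteq> fst q\<close> show False
          using R(2) unfolding antisym_def by blast
      qed
      with pq qp show "p = q"
        unfolding tag_lex_def by (simp add: prod_eq_iff)
    qed
    show "trans (tag_lex R S)"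
      unfolding trans_def
    proof (intro allI impI)
      fix p q u assume pq: "(p, q) \<in> tag_lex R S" and qu: "(q, u) \<in> tag_lex R S"
      have "(fst p, fst u) \<in> R \<and> fst p \<noteq> fst u"
        if "(fst p, fst q) \<in> R" "(fst q, fst u) \<in> R" "fst p \<noteq> fst q"
      proof
        show "(fst p, fst u) \<in> R"
          using R(1) that(1,2) unfolding trans_def by blast
        show "fst p \<noteq> fst u"
          using R(2) that unfolding antisym_def by metis
      qed
      with pq qu show "(p, u) \<in> tag_lex R S"
        unfolding tag_lex_def by auto
    qed
    show "total_on S (tag_lex R S)"
      unfolding total_on_def
    proof (intro ballI impI)
      fix p q assume p: "p \<in> S" and q: "q \<in> S" and "p \<noteq> q"
      show "(p, q) \<in> tag_lex R S \<or> (q, p) \<in> tag_lex R S"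
      proof (cases "fst p = fst q")
        case True
        then show ?thesis
          using p q unfolding tag_lex_def by auto
      next
        case False
        then have "(fst p, fst q) \<in> R \<or> (fst q, fst p) \<in> R"
          using R(3) assms(2) p q unfolding total_on_def by blast
        with False show ?thesis
          using p q unfolding tag_lex_def by auto
      qed
    qed
  qed
qed

definition order_convex :: "'a rel \<Rightarrow> 'a set \<Rightarrow> bool" where
  "order_convex R C \<longleftrightarrow> (\<forall>a\<in>C. \<forall>b\<in>C. \<forall>z. (a, z) \<in> R \<longrightarrow> (z, b) \<in> R \<longrightarrow> z \<in> C)"

lemma topspace_order_topology_on [simp]: "topspace (order_topology_on S r) = S"
  unfolding order_topology_on_def topology_generated_by_topspace by blast

lemma order_topology_on_eq_rays:
  assumes "r \<subseteq> S \<times> S"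
  shows "order_topology_on S r = topology_generated_by
    ({S} \<union> aboveS r ` S \<union> underS r ` S \<union> {aboveS r a \<inter> underS r b |a b. a \<in> S \<and> b \<in> S})"
proof -
  have above: "{z \<in> S. (a, z) \<in> r \<and> a \<noteq> z} = aboveS r a" for a
    using assms by (auto simp: aboveS_def)
  have below: "{z \<in> S. (z, b) \<in> r \<and> z \<noteq> b} = underS r b" for b
    using assms by (auto simp: underS_def)
  have interval: "{z \<in> S. (a, z) \<in> r \<and> a \<noteq> z \<and> (z, b) \<in> r \<and> z \<noteq> b} = aboveS r a \<inter> underS r b"
    for a b using assms by (auto simp: aboveS_def underS_def)
  show ?thesis
    unfolding order_topology_on_def interval above below Setcompr_eq_image ..
qed

lemma openin_order_topology_on_aboveS:
  assumes "r \<subseteq> S \<times> S" and "a \<in> S"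
  shows "openin (order_topology_on S r) (aboveS r a)"
  unfolding order_topology_on_eq_rays[OF assms(1)]
  by (rule topology_generated_by_Basis) (use assms(2) in blast)

lemma openin_order_topology_on_underS:
  assumes "r \<subseteq> S \<times> S" and "b \<in> S"
  shows "openin (order_topology_on S r) (underS r b)"
  unfolding order_topology_on_eq_rays[OF assms(1)]
  by (rule topology_generated_by_Basis) (use assms(2) in blast)

lemma continuous_map_into_order_topology_on:
  assumes r: "r \<subseteq> S \<times> S" and f: "f \<in> topspace X \<rightarrow> S"
    and above: "\<And>a. a \<in> S \<Longrightarrow> openin X {x \<in> topspace X. f x \<in> aboveS r a}"
    and below: "\<And>b. b \<in> S \<Longrightarrow> openin X {x \<in> topspace X. f x \<in> underS r b}"
  shows "continuous_map X (order_topology_on S r) f"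
  unfolding order_topology_on_eq_rays[OF r]
proof (rule continuous_on_generated_topo)
  fix U
  assume "U \<in> {S} \<union> aboveS r ` S \<union> underS r ` S \<union> {aboveS r a \<inter> underS r b |a b. a \<in> S \<and> b \<in> S}"
  then consider "U = S" | a where "a \<in> S" "U = aboveS r a" | b where "b \<in> S" "U = underS r b"
    | a b where "a \<in> S" "b \<in> S" "U = aboveS r a \<inter> underS r b"
    by blast
  then have "openin X {x \<in> topspace X. f x \<in> U}"
  proof cases
    case 1
    have "{x \<in> topspace X. f x \<in> S} = topspace X"
      using f by blast
    with 1 show ?thesis
      by simp
  next
    case (4 a b)
    have "{x \<in> topspace X. f x \<in> U} = {x \<in> topspace X. f x \<in> aboveS r a} \<inter> {x \<in> topspace X. f x \<in> underS r b}"
      using 4(3) by blast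
    then show ?thesis
      using above[OF 4(1)] below[OF 4(2)] by (simp add: openin_Int)
  qed (use above below in simp_all)
  moreover have "f -` U \<inter> topspace X = {x \<in> topspace X. f x \<in> U}"
    by blast
  ultimately show "openin X (f -` U \<inter> topspace X)"
    by simp
qed (use f in blast)

section \<open>Linearly ordered spaces with a convex base\<close>

locale convex_ordered_space =
  fixes X :: "'a topology" and R :: "'a rel"
  assumes linear: "linear_order_on (topspace X) R"
    and openin_underS: "x \<in> topspace X \<Longrightarrow> openin X (underS R x)"
    and openin_aboveS: "x \<in> topspace X \<Longrightarrow> openin X (aboveS R x)"
    and convex_base: "\<lbrakk>openin X U; x \<in> U\<rbrakk> \<Longrightarrow> \<exists>C. openin X C \<and> order_convex R C \<and> x \<in> C \<and> C \<subseteq> U"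
begin

lemma R_subset: "R \<subseteq> topspace X \<times> topspace X"
  using linear by (simp add: order_on_defs refl_on_def)

lemma R_refl: "x \<in> topspace X \<Longrightarrow> (x, x) \<in> R"
  using linear by (simp add: order_on_defs refl_on_def)

lemma R_total: "\<lbrakk>x \<in> topspace X; y \<in> topspace X\<rbrakk> \<Longrightarrow> (x, y) \<in> R \<or> (y, x) \<in> R"
  using linear R_refl unfolding order_on_defs total_on_def by metis

text \<open>The LOTS receiving \<open>X \<times> {0}\<close>: a point \<open>(x, -1)\<close> is inserted immediately below
  \<open>(x, 0)\<close> when the closed ray \<open>[x, \<rightarrow>)\<close> is open in \<open>X\<close>, and \<open>(x, 1)\<close> immediately above it
  when \<open>(\<leftarrow>, x]\<close> is open, so that these closed rays become traces of open rays.\<close>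

definition tagged :: "('a \<times> int) set" where
  "tagged = topspace X \<times> {0}
     \<union> {x \<in> topspace X. openin X (above R x)} \<times> {-1}
     \<union> {x \<in> topspace X. openin X (under R x)} \<times> {1}"

abbreviation tag_order :: "('a \<times> int) rel" where
  "tag_order \<equiv> tag_lex R tagged"

abbreviation tag_LOTS :: "('a \<times> int) topology" where
  "tag_LOTS \<equiv> order_topology_on tagged tag_order"

lemma fst_tagged: "fst ` tagged \<subseteq> topspace X"
  by (auto simp: tagged_def)

lemma tag_order_subset: "tag_order \<subseteq> tagged \<times> tagged"
  by (auto simp: tag_lex_def)

lemma LOTS_tag_LOTS: "LOTS tag_LOTS"
  unfolding LOTS_def using linear_order_on_tag_lex[OF linear fst_tagged] by blast

lemma zero_tagged: "x \<in> topspace X \<Longrightarrow> (x, 0) \<in> tagged"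
  by (simp add: tagged_def)

lemma openin_tag_preimage_aboveS:
  assumes "(y, k) \<in> tagged"
  shows "openin X {x \<in> topspace X. (x, 0) \<in> aboveS tag_order (y, k)}"
proof -
  have y: "y \<in> topspace X" and k: "k \<in> {-1, 0, 1}"
    using assms by (auto simp: tagged_def)
  have "{x \<in> topspace X. (x, 0) \<in> aboveS tag_order (y, k)} = (if k = -1 then above R y else aboveS R y)"
    using assms y k R_subset R_refl zero_tagged by (auto simp: aboveS_def above_def tag_lex_def)
  moreover have "k = -1 \<Longrightarrow> openin X (above R y)"
    using assms by (auto simp: tagged_def)
  ultimately show ?thesis
    using openin_aboveS[OF y] by simp
qed

lemma openin_tag_preimage_underS:
  assumes "(y, k) \<in> tagged"
  shows "openin X {x \<in> topspace X. (x, 0) \<in> underS tag_order (y, k)}"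
proof -
  have y: "y \<in> topspace X" and k: "k \<in> {-1, 0, 1}"
    using assms by (auto simp: tagged_def)
  have "{x \<in> topspace X. (x, 0) \<in> underS tag_order (y, k)} = (if k = 1 then under R y else underS R y)"
    using assms y k R_subset R_refl zero_tagged by (auto simp: underS_def under_def tag_lex_def)
  moreover have "k = 1 \<Longrightarrow> openin X (under R y)"
    using assms by (auto simp: tagged_def)
  ultimately show ?thesis
    using openin_underS[OF y] by simp
qed

lemma continuous_map_tag: "continuous_map X tag_LOTS (\<lambda>x. (x, 0))"
  by (rule continuous_map_into_order_topology_on[OF tag_order_subset])
    (use zero_tagged openin_tag_preimage_aboveS openin_tag_preimage_underS in auto)

lemma tag_neighbourhood_above:
  assumes "openin X C" and "x \<in> C"
  obtains N where "openin tag_LOTS N" "(x, 0) \<in> N" "\<And>y. (y, 0) \<in> N \<Longrightarrow> \<exists>a\<in>C. (a, y) \<in> R"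
proof (cases "\<exists>a\<in>C. a \<in> underS R x")
  case True
  then obtain a where a: "a \<in> C" "a \<in> underS R x"
    by blast
  have "a \<in> topspace X" "x \<in> topspace X"
    using assms a openin_subset by blast+
  then have "(a, 0) \<in> tagged" "(x, 0) \<in> tagged"
    by (simp_all add: zero_tagged)
  show ?thesis
  proof
    show "openin tag_LOTS (aboveS tag_order (a, 0))"
      by (rule openin_order_topology_on_aboveS[OF tag_order_subset \<open>(a, 0) \<in> tagged\<close>])
    show "(x, 0) \<in> aboveS tag_order (a, 0)"
      using a \<open>(a, 0) \<in> tagged\<close> \<open>(x, 0) \<in> tagged\<close> by (auto simp: aboveS_def underS_def tag_lex_def)
    show "\<exists>a\<in>C. (a, y) \<in> R" if "(y, 0) \<in> aboveS tag_order (a, 0)" for y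
      using that a R_refl \<open>a \<in> topspace X\<close> by (auto simp: aboveS_def tag_lex_def)
  qed
next
  case False
  have x: "x \<in> topspace X"
    using assms openin_subset by blast
  have "above R x = C \<union> aboveS R x"
  proof
    show "C \<union> aboveS R x \<subseteq> above R x"
    proof (intro Un_least subsetI)
      fix c assume "c \<in> C"
      then have "c \<in> topspace X" "c \<notin> underS R x"
        using assms False openin_subset by blast+
      then show "c \<in> above R x"
        using R_total[OF x] by (auto simp: above_def underS_def)
    qed (auto simp: above_def aboveS_def)
    show "above R x \<subseteq> C \<union> aboveS R x"
      using assms(2) by (auto simp: above_def aboveS_def)
  qed
  then have "openin X (above R x)"
    using assms(1) openin_aboveS[OF x] by auto
  then have tagged: "(x, -1) \<in> tagged" "(x, 0) \<in> tagged"
    using x by (simp_all add: tagged_def)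
  show ?thesis
  proof
    show "openin tag_LOTS (aboveS tag_order (x, -1))"
      by (rule openin_order_topology_on_aboveS[OF tag_order_subset tagged(1)])
    show "(x, 0) \<in> aboveS tag_order (x, -1)"
      using tagged by (auto simp: aboveS_def tag_lex_def)
    show "\<exists>a\<in>C. (a, y) \<in> R" if "(y, 0) \<in> aboveS tag_order (x, -1)" for y
      using that assms(2) R_refl x by (auto simp: aboveS_def tag_lex_def)
  qed
qed

lemma tag_neighbourhood_below:
  assumes "openin X C" and "x \<in> C"
  obtains N where "openin tag_LOTS N" "(x, 0) \<in> N" "\<And>y. (y, 0) \<in> N \<Longrightarrow> \<exists>b\<in>C. (y, b) \<in> R"
proof (cases "\<exists>b\<in>C. b \<in> aboveS R x")
  case True
  then obtain b where b: "b \<in> C" "b \<in> aboveS R x"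
    by blast
  have "b \<in> topspace X" "x \<in> topspace X"
    using assms b openin_subset by blast+
  then have "(b, 0) \<in> tagged" "(x, 0) \<in> tagged"
    by (simp_all add: zero_tagged)
  show ?thesis
  proof
    show "openin tag_LOTS (underS tag_order (b, 0))"
      by (rule openin_order_topology_on_underS[OF tag_order_subset \<open>(b, 0) \<in> tagged\<close>])
    show "(x, 0) \<in> underS tag_order (b, 0)"
      using b \<open>(b, 0) \<in> tagged\<close> \<open>(x, 0) \<in> tagged\<close> by (auto simp: aboveS_def underS_def tag_lex_def)
    show "\<exists>b\<in>C. (y, b) \<in> R" if "(y, 0) \<in> underS tag_order (b, 0)" for y
      using that b R_refl \<open>b \<in> topspace X\<close> by (auto simp: underS_def tag_lex_def)
  qed
next
  case False
  have x: "x \<in> topspace X"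
    using assms openin_subset by blast
  have "under R x = C \<union> underS R x"
  proof
    show "C \<union> underS R x \<subseteq> under R x"
    proof (intro Un_least subsetI)
      fix c assume "c \<in> C"
      then have "c \<in> topspace X" "c \<notin> aboveS R x"
        using assms False openin_subset by blast+
      then show "c \<in> under R x"
        using R_total[OF x] by (auto simp: under_def aboveS_def)
    qed (auto simp: under_def underS_def)
    show "under R x \<subseteq> C \<union> underS R x"
      using assms(2) by (auto simp: under_def underS_def)
  qed
  then have "openin X (under R x)"
    using assms(1) openin_underS[OF x] by auto
  then have tagged: "(x, 1) \<in> tagged" "(x, 0) \<in> tagged"
    using x by (simp_all add: tagged_def)
  show ?thesis
  proof
    show "openin tag_LOTS (underS tag_order (x, 1))"
      by (rule openin_order_topology_on_underS[OF tag_order_subset tagged(1)])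
    show "(x, 0) \<in> underS tag_order (x, 1)"
      using tagged by (auto simp: underS_def tag_lex_def)
    show "\<exists>b\<in>C. (y, b) \<in> R" if "(y, 0) \<in> underS tag_order (x, 1)" for y
      using that assms(2) R_refl x by (auto simp: underS_def tag_lex_def)
  qed
qed

lemma open_map_tag: "open_map X (subtopology tag_LOTS (topspace X \<times> {0})) (\<lambda>x. (x, 0))"
  unfolding open_map_def
proof (intro allI impI)
  let ?f = "\<lambda>x. (x, 0::int)"
  fix U assume U: "openin X U"
  show "openin (subtopology tag_LOTS (topspace X \<times> {0})) (?f ` U)"
    unfolding openin_subopen[of _ "?f ` U"]
  proof
    fix p assume "p \<in> ?f ` U"
    then obtain x where p: "p = (x, 0)" and "x \<in> U"
      by blast
    then obtain C where C: "openin X C" "order_convex R C" "x \<in> C" "C \<subseteq> U"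
      using convex_base[OF U] by blast
    obtain N1 where N1: "openin tag_LOTS N1" "(x, 0) \<in> N1" "\<And>y. (y, 0) \<in> N1 \<Longrightarrow> \<exists>a\<in>C. (a, y) \<in> R"
      using tag_neighbourhood_above[OF C(1,3)] by blast
    obtain N2 where N2: "openin tag_LOTS N2" "(x, 0) \<in> N2" "\<And>y. (y, 0) \<in> N2 \<Longrightarrow> \<exists>b\<in>C. (y, b) \<in> R"
      using tag_neighbourhood_below[OF C(1,3)] by blast
    show "\<exists>N. openin (subtopology tag_LOTS (topspace X \<times> {0})) N \<and> p \<in> N \<and> N \<subseteq> ?f ` U"
    proof (intro exI conjI)
      show "openin (subtopology tag_LOTS (topspace X \<times> {0})) (N1 \<inter> N2 \<inter> topspace X \<times> {0})"
        unfolding openin_subtopology using openin_Int[OF N1(1) N2(1)] by blast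
      show "p \<in> N1 \<inter> N2 \<inter> topspace X \<times> {0}"
        using p N1(2) N2(2) \<open>x \<in> U\<close> U openin_subset by blast
      show "N1 \<inter> N2 \<inter> topspace X \<times> {0} \<subseteq> ?f ` U"
      proof clarify
        fix y assume "(y, 0::int) \<in> N1" "(y, 0::int) \<in> N2"
        then have "y \<in> C"
          using N1(3) N2(3) C(2) unfolding order_convex_def by blast
        then show "(y, 0) \<in> ?f ` U"
          using C(4) by blast
      qed
    qed
  qed
qed

theorem GO_space: "GO_space X"
  unfolding GO_space_def GO_space_in_def
proof (intro exI conjI)
  let ?f = "\<lambda>x. (x, 0::int)"
  show "LOTS tag_LOTS"
    by (rule LOTS_tag_LOTS)
  show "topspace X \<times> {0} \<subseteq> topspace tag_LOTS"
    using zero_tagged by auto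
  have "homeomorphic_map X (subtopology tag_LOTS (topspace X \<times> {0})) ?f"
  proof (rule bijective_open_imp_homeomorphic_map)
    show "continuous_map X (subtopology tag_LOTS (topspace X \<times> {0})) ?f"
      using continuous_map_tag by (auto simp: continuous_map_in_subtopology)
    show "?f ` topspace X = topspace (subtopology tag_LOTS (topspace X \<times> {0}))"
      using zero_tagged by auto
  qed (auto simp: open_map_tag inj_on_def)
  then show "X homeomorphic_space subtopology tag_LOTS (topspace X \<times> {0})"
    by (rule homeomorphic_map_imp_homeomorphic_space)
qed

end

section \<open>Lexicographic orders from well-ordered keys\<close>

locale lex_keys =
  fixes W :: "'i rel" and T :: "'a set" and key :: "'i \<Rightarrow> 'a \<Rightarrow> 'k" and V :: "'k rel"
  assumes Well_order_W: "Well_order W"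
    and linear_V: "linear_order_on UNIV V"
    and separating: "\<lbrakk>x \<in> T; y \<in> T; x \<noteq> y\<rbrakk> \<Longrightarrow> \<exists>i\<in>Field W. key i x \<noteq> key i y"
begin

definition first_diff :: "'a \<Rightarrow> 'a \<Rightarrow> 'i \<Rightarrow> bool" where
  "first_diff x y i \<longleftrightarrow> i \<in> Field W \<and> (\<forall>j\<in>underS W i. key j x = key j y) \<and> key i x \<noteq> key i y"

definition lex_less :: "'a \<Rightarrow> 'a \<Rightarrow> bool" where
  "lex_less x y \<longleftrightarrow> (\<exists>i. first_diff x y i \<and> (key i x, key i y) \<in> V)"

definition lex_order :: "'a rel" where
  "lex_order = {(x, y). x \<in> T \<and> y \<in> T \<and> (x = y \<or> lex_less x y)}"

definition block :: "'i \<Rightarrow> 'a \<Rightarrow> 'a set" where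
  "block i z = {w \<in> T. \<forall>j\<in>under W i. key j w = key j z}"

lemma V_antisym: "\<lbrakk>(a, b) \<in> V; (b, a) \<in> V\<rbrakk> \<Longrightarrow> a = b"
  using linear_V unfolding order_on_defs antisym_def by blast

lemma V_trans: "\<lbrakk>(a, b) \<in> V; (b, c) \<in> V\<rbrakk> \<Longrightarrow> (a, c) \<in> V"
  using linear_V unfolding order_on_defs trans_def by blast

lemma V_total: "a \<noteq> b \<Longrightarrow> (a, b) \<in> V \<or> (b, a) \<in> V"
  using linear_V unfolding order_on_defs total_on_def by blast

lemma under_eq: "i \<in> Field W \<Longrightarrow> under W i = insert i (underS W i)"
  using Well_order_W Refl_under_underS by (fastforce simp: order_on_defs)

lemma under_mono: "i \<in> under W k \<Longrightarrow> under W i \<subseteq> under W k"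
  using Well_order_W under_incr by (fastforce simp: order_on_defs under_def)

lemma underS_trans: "\<lbrakk>j \<in> underS W i; i \<in> underS W k\<rbrakk> \<Longrightarrow> j \<in> underS W k"
  using Well_order_W underS_incr[of W i k] by (auto simp: order_on_defs underS_def)

lemma underS_cases:
  assumes "i \<in> Field W" and "k \<in> Field W"
  obtains "i = k" | "i \<in> underS W k" | "k \<in> underS W i"
  using Well_order_W assms unfolding order_on_defs total_on_def underS_def by blast

lemma first_diff_exists:
  assumes "x \<in> T" and "y \<in> T" and "x \<noteq> y"
  shows "\<exists>i. first_diff x y i"
proof -
  interpret wo_rel W
    using Well_order_W by (rule wo_rel.intro)
  define D where "D = {i \<in> Field W. key i x \<noteq> key i y}"
  have D: "D \<subseteq> Field W" "D \<noteq> {}"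
    using separating[OF assms] by (auto simp: D_def)
  have "key j x = key j y" if "j \<in> underS (minim D)" for j
  proof (rule ccontr)
    assume "key j x \<noteq> key j y"
    with that have "j \<in> D"
      by (auto simp: D_def underS_def Field_def)
    then have "(minim D, j) \<in> W"
      using minim_least[OF D(1)] by blast
    with that show False
      using ANTISYM by (auto simp: underS_def antisym_def)
  qed
  then have "first_diff x y (minim D)"
    using minim_in[OF D] by (auto simp: first_diff_def D_def)
  then show ?thesis ..
qed

lemma first_diff_sym: "first_diff x y i \<Longrightarrow> first_diff y x i"
  by (auto simp: first_diff_def)

lemma first_diff_unique:
  assumes "first_diff x y i" and "first_diff x y k"
  shows "i = k"
proof -
  from assms have "i \<in> Field W" "k \<in> Field W"
    by (simp_all add: first_diff_def)
  then show ?thesis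
    by (cases rule: underS_cases) (use assms in \<open>auto simp: first_diff_def\<close>)
qed

lemma first_diff_below:
  assumes "first_diff x y i" and "first_diff y z k" and "i \<in> underS W k"
  shows "first_diff x z i" and "key i z = key i y"
proof -
  show "key i z = key i y"
    using assms(2,3) by (simp add: first_diff_def)
  moreover have "key j y = key j z" if "j \<in> underS W i" for j
    using assms(2) underS_trans[OF that assms(3)] by (simp add: first_diff_def)
  ultimately show "first_diff x z i"
    using assms(1) by (simp add: first_diff_def)
qed

lemma lex_less_trans:
  assumes "lex_less x y" and "lex_less y z"
  shows "lex_less x z"
proof -
  obtain i where i: "first_diff x y i" "(key i x, key i y) \<in> V"
    using assms(1) by (auto simp: lex_less_def)
  obtain k where k: "first_diff y z k" "(key k y, key k z) \<in> V"
    using assms(2) by (auto simp: lex_less_def)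
  from i(1) k(1) have "i \<in> Field W" "k \<in> Field W"
    by (simp_all add: first_diff_def)
  then show ?thesis
  proof (cases rule: underS_cases)
    case 1
    have "key i x \<noteq> key i z"
    proof
      assume "key i x = key i z"
      with k(2) 1 have "(key i y, key i x) \<in> V"
        by simp
      with i show False
        using V_antisym by (auto simp: first_diff_def)
    qed
    then have "first_diff x z i"
      using i(1) k(1) 1 by (simp add: first_diff_def)
    then show ?thesis
      using i(2) k(2) 1 V_trans by (auto simp: lex_less_def)
  next
    case 2
    then show ?thesis
      using first_diff_below[OF i(1) k(1) 2] i(2) by (auto simp: lex_less_def)
  next
    case 3
    note below = first_diff_below[OF first_diff_sym[OF k(1)] first_diff_sym[OF i(1)] 3]
    then show ?thesis
      using first_diff_sym[OF below(1)] k(2) by (auto simp: lex_less_def)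
  qed
qed

lemma lex_less_asym:
  assumes "lex_less x y"
  shows "\<not> lex_less y x"
proof
  assume "lex_less y x"
  then obtain k where k: "first_diff y x k" "(key k y, key k x) \<in> V"
    by (auto simp: lex_less_def)
  obtain i where i: "first_diff x y i" "(key i x, key i y) \<in> V"
    using assms by (auto simp: lex_less_def)
  have "k = i"
    using first_diff_unique[OF first_diff_sym[OF k(1)] i(1)] .
  with i k show False
    using V_antisym by (auto simp: first_diff_def)
qed

lemma linear_order_on_lex_order: "linear_order_on T lex_order"
  unfolding order_on_defs
proof (intro conjI)
  show "lex_order \<subseteq> T \<times> T" "refl_on T lex_order"
    by (auto simp: lex_order_def refl_on_def)
  show "antisym lex_order"
    using lex_less_asym by (auto simp: lex_order_def antisym_def)
  show "trans lex_order"
    using lex_less_trans by (auto simp: lex_order_def trans_def)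
  show "total_on T lex_order"
    unfolding total_on_def lex_order_def
  proof (intro ballI impI)
    fix x y assume "x \<in> T" "y \<in> T" "x \<noteq> y"
    then obtain i where i: "first_diff x y i"
      using first_diff_exists by blast
    then have "(key i x, key i y) \<in> V \<or> (key i y, key i x) \<in> V"
      using V_total by (simp add: first_diff_def)
    then have "lex_less x y \<or> lex_less y x"
      using i first_diff_sym unfolding lex_less_def by blast
    then show "(x, y) \<in> {(x, y). x \<in> T \<and> y \<in> T \<and> (x = y \<or> lex_less x y)} \<or>
               (y, x) \<in> {(x, y). x \<in> T \<and> y \<in> T \<and> (x = y \<or> lex_less x y)}"
      using \<open>x \<in> T\<close> \<open>y \<in> T\<close> by blast
  qed
qed

lemma block_self: "z \<in> T \<Longrightarrow> z \<in> block i z"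
  by (simp add: block_def)

lemma block_eq_Inter:
  assumes "i \<in> Field W"
  shows "block i z = (T \<inter> (\<Inter>j\<in>underS W i. {w \<in> T. key j w = key j z})) \<inter> {w \<in> T. key i w = key i z}"
  unfolding block_def under_eq[OF assms] by blast

lemma block_subset_fibre:
  assumes "i \<in> Field W"
  shows "block i z \<subseteq> {w \<in> T. key i w = key i z}"
  unfolding block_eq_Inter[OF assms] by (rule Int_lower2)

lemma first_diff_block:
  assumes "first_diff y z i" and "w \<in> block i z"
  shows "first_diff y w i" and "key i w = key i z"
proof -
  have "i \<in> Field W"
    using assms(1) by (simp add: first_diff_def)
  then have agree: "key j w = key j z" if "j \<in> insert i (underS W i)" for j
    using assms(2) that by (auto simp: block_def under_eq)
  then show "key i w = key i z"
    by simp
  with assms(1) agree show "first_diff y w i"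
    by (simp add: first_diff_def)
qed

lemma block_subset_aboveS:
  assumes "z \<in> aboveS lex_order y"
  obtains i where "i \<in> Field W" "block i z \<subseteq> aboveS lex_order y"
proof -
  obtain i where i: "first_diff y z i" "(key i y, key i z) \<in> V" and "y \<in> T"
    using assms by (auto simp: aboveS_def lex_order_def lex_less_def)
  have "w \<in> aboveS lex_order y" if w: "w \<in> block i z" for w
  proof -
    note fd = first_diff_block[OF i(1) w]
    then have "lex_less y w" "w \<noteq> y"
      using i(2) by (auto simp: lex_less_def first_diff_def)
    moreover have "w \<in> T"
      using w by (simp add: block_def)
    ultimately show ?thesis
      using \<open>y \<in> T\<close> by (simp add: aboveS_def lex_order_def)
  qed
  with i(1) show ?thesis
    using that by (auto simp: first_diff_def)
qed

lemma block_subset_underS: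
  assumes "z \<in> underS lex_order y"
  obtains i where "i \<in> Field W" "block i z \<subseteq> underS lex_order y"
proof -
  obtain i where i: "first_diff y z i" "(key i z, key i y) \<in> V" and "y \<in> T"
    using assms first_diff_sym by (auto simp: underS_def lex_order_def lex_less_def)
  have "w \<in> underS lex_order y" if w: "w \<in> block i z" for w
  proof -
    note fd = first_diff_block[OF i(1) w]
    then have "lex_less w y" "w \<noteq> y"
      using i(2) first_diff_sym[OF fd(1)] by (auto simp: lex_less_def first_diff_def)
    moreover have "w \<in> T"
      using w by (simp add: block_def)
    ultimately show ?thesis
      using \<open>y \<in> T\<close> by (simp add: underS_def lex_order_def)
  qed
  with i(1) show ?thesis
    using that by (auto simp: first_diff_def)
qed

lemma first_diff_leaving_block:
  assumes "first_diff a z m" and "i \<in> Field W" and "a \<in> block i x" and "z \<in> T - block i x"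
  shows "m \<in> under W i"
proof (rule ccontr)
  assume m: "m \<notin> under W i"
  have "m \<in> Field W"
    using assms(1) by (simp add: first_diff_def)
  then have "i \<in> underS W m"
    by (cases rule: underS_cases[OF assms(2)]) (use m under_eq[OF assms(2)] in auto)
  then have "under W i \<subseteq> underS W m"
    unfolding under_eq[OF assms(2)] using underS_trans by blast
  moreover obtain j where j: "j \<in> under W i" "key j z \<noteq> key j x"
    using assms(4) by (auto simp: block_def)
  ultimately have "key j a = key j z"
    using assms(1) by (auto simp: first_diff_def)
  with j assms(3) show False
    by (simp add: block_def)
qed

lemma order_convex_block:
  assumes "i \<in> Field W"
  shows "order_convex lex_order (block i x)"
  unfolding order_convex_def
proof (intro ballI allI impI)
  fix a b z
  assume a: "a \<in> block i x" and b: "b \<in> block i x"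
    and az: "(a, z) \<in> lex_order" and zb: "(z, b) \<in> lex_order"
  show "z \<in> block i x"
  proof (rule ccontr)
    assume z: "z \<notin> block i x"
    have "z \<in> T" "a \<noteq> z"
      using az a z by (auto simp: lex_order_def)
    then obtain m where m: "first_diff a z m" "(key m a, key m z) \<in> V"
      using az by (auto simp: lex_order_def lex_less_def)
    have "m \<in> under W i"
      using first_diff_leaving_block[OF m(1) assms a] z \<open>z \<in> T\<close> by blast
    then have "under W m \<subseteq> under W i"
      by (rule under_mono)
    moreover have "m \<in> Field W"
      using m(1) by (simp add: first_diff_def)
    ultimately have ab: "key j a = key j b" if "j \<in> insert m (underS W m)" for j
      using a b that under_eq by (auto simp: block_def)
    then have "first_diff z b m"
      using first_diff_sym[OF m(1)] by (simp add: first_diff_def)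
    then have "lex_less z b"
      using zb by (auto simp: lex_order_def first_diff_def)
    then obtain m' where "first_diff z b m'" "(key m' z, key m' b) \<in> V"
      by (auto simp: lex_less_def)
    with \<open>first_diff z b m\<close> have "(key m z, key m a) \<in> V"
      using first_diff_unique ab by fastforce
    then show False
      using m V_antisym by (auto simp: first_diff_def)
  qed
qed

lemma convex_ordered_space_lex_order:
  assumes T: "T = topspace X"
    and openin_block: "\<And>i z. i \<in> Field W \<Longrightarrow> openin X (block i z)"
    and block_base: "\<And>U x. \<lbrakk>openin X U; x \<in> U\<rbrakk> \<Longrightarrow> \<exists>i\<in>Field W. block i x \<subseteq> U"
  shows "convex_ordered_space X lex_order"
proof
  show "linear_order_on (topspace X) lex_order"
    using linear_order_on_lex_order T by simp
  show "openin X (underS lex_order y)" for y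
    unfolding openin_subopen[of X "underS lex_order y"]
  proof
    fix z assume z: "z \<in> underS lex_order y"
    then obtain i where "i \<in> Field W" "block i z \<subseteq> underS lex_order y"
      by (rule block_subset_underS)
    moreover have "z \<in> T"
      using z by (auto simp: underS_def lex_order_def)
    ultimately show "\<exists>N. openin X N \<and> z \<in> N \<and> N \<subseteq> underS lex_order y"
      using openin_block block_self by (intro exI[of _ "block i z"]) simp
  qed
  show "openin X (aboveS lex_order y)" for y
    unfolding openin_subopen[of X "aboveS lex_order y"]
  proof
    fix z assume z: "z \<in> aboveS lex_order y"
    then obtain i where "i \<in> Field W" "block i z \<subseteq> aboveS lex_order y"
      by (rule block_subset_aboveS)
    moreover have "z \<in> T"
      using z by (auto simp: aboveS_def lex_order_def)
    ultimately show "\<exists>N. openin X N \<and> z \<in> N \<and> N \<subseteq> aboveS lex_order y"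
      using openin_block block_self by (intro exI[of _ "block i z"]) simp
  qed
  fix U x assume "openin X U" "x \<in> U"
  then obtain i where "i \<in> Field W" "block i x \<subseteq> U"
    using block_base by blast
  moreover have "x \<in> T"
    using \<open>openin X U\<close> \<open>x \<in> U\<close> T openin_subset by blast
  ultimately show "\<exists>C. openin X C \<and> order_convex lex_order C \<and> x \<in> C \<and> C \<subseteq> U"
    using openin_block order_convex_block block_self by (intro exI[of _ "block i x"]) simp
qed

end

section \<open>P-number and discrete clopen families\<close>

lemma openin_Inter_ordLess_P_number:
  assumes "\<And>U. U \<in> \<F> \<Longrightarrow> openin X U" and "|\<F>| <o P_number X"
  shows "openin X (topspace X \<inter> \<Inter>\<F>)"
proof (cases "X = discrete_topology (topspace X)")
  case True
  have "openin (discrete_topology (topspace X)) (topspace X \<inter> \<Inter>\<F>)"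
    by simp
  then show ?thesis
    by (simp only: True[symmetric])
next
  case False
  show ?thesis
  proof (rule ccontr)
    assume "\<not> ?thesis"
    with assms(1) have bad: "\<F> \<in> bad_open_families X"
      by (auto simp: bad_open_families_def)
    define minimal where "minimal F \<longleftrightarrow>
      F \<in> bad_open_families X \<and> (\<forall>G\<in>bad_open_families X. card_of F \<le>o card_of G)" for F
    have "\<exists>r\<in>card_of ` bad_open_families X. \<forall>r'\<in>card_of ` bad_open_families X. r \<le>o r'"
      by (rule exists_minim_Card_order) (use bad card_of_Card_order in auto)
    then obtain F0 where "minimal F0"
      unfolding minimal_def by blast
    then have "minimal (SOME F. minimal F)"
      by (rule someI)
    then have "|SOME F. minimal F| \<le>o |\<F>|"
      using bad by (simp add: minimal_def)
    moreover have "P_number X = |SOME F. minimal F|"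
      using False by (simp add: P_number_def minimal_def)
    ultimately show False
      using assms(2) not_ordLess_ordLeq by auto
  qed
qed

lemma discrete_familyE:
  assumes "discrete_family X \<F>" and "x \<in> topspace X"
  obtains U where "openin X U" "x \<in> U"
    "\<And>A B. \<lbrakk>A \<in> \<F>; B \<in> \<F>; A \<inter> U \<noteq> {}; B \<inter> U \<noteq> {}\<rbrakk> \<Longrightarrow> A = B"
  using assms unfolding discrete_family_def by meson

definition members_containing :: "'a set set \<Rightarrow> 'a \<Rightarrow> 'a set set" where
  "members_containing \<F> x = {B \<in> \<F>. x \<in> B}"

lemma locally_constant_members_containing:
  assumes discrete: "discrete_family X \<F>" and clopen: "\<And>B. B \<in> \<F> \<Longrightarrow> openin X B \<and> closedin X B"
    and x: "x \<in> topspace X"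
  obtains N where "openin X N" "x \<in> N" "\<And>v. v \<in> N \<Longrightarrow> members_containing \<F> v = members_containing \<F> x"
proof -
  obtain U where U: "openin X U" "x \<in> U"
    and meets_one: "\<And>A B. \<lbrakk>A \<in> \<F>; B \<in> \<F>; A \<inter> U \<noteq> {}; B \<inter> U \<noteq> {}\<rbrakk> \<Longrightarrow> A = B"
    using discrete_familyE[OF discrete x] by blast
  show ?thesis
  proof (cases "\<exists>A\<in>\<F>. A \<inter> U \<noteq> {}")
    case True
    then obtain A where A: "A \<in> \<F>" "A \<inter> U \<noteq> {}"
      by blast
    have only_A: "B = A" if "B \<in> \<F>" "v \<in> B" "v \<in> U" for B v
      by (rule meets_one[OF that(1) A(1) _ A(2)]) (use that(2,3) in blast)
    have in_A: "members_containing \<F> v = {A}" if "v \<in> U" "v \<in> A" for v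
      unfolding members_containing_def using only_A that A(1) by blast
    have not_in_A: "members_containing \<F> v = {}" if "v \<in> U" "v \<notin> A" for v
      unfolding members_containing_def using only_A that by blast
    show ?thesis
    proof (cases "x \<in> A")
      case True
      show ?thesis
      proof (rule that)
        show "openin X (U \<inter> A)"
          using U(1) clopen[OF A(1)] by (simp add: openin_Int)
        show "x \<in> U \<inter> A"
          using True U(2) by (rule IntI[rotated])
        show "members_containing \<F> v = members_containing \<F> x" if "v \<in> U \<inter> A" for v
          using in_A that True U(2) by simp
      qed
    next
      case False
      show ?thesis
      proof (rule that)
        show "openin X (U - A)"
          using U(1) clopen[OF A(1)] by (simp add: openin_diff)
        show "x \<in> U - A"
          using False U(2) by (rule DiffI[rotated])
        show "members_containing \<F> v = members_containing \<F> x" if "v \<in> U - A" for v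
          using not_in_A that False U(2) by simp
      qed
    qed
  next
    case False
    then have none: "members_containing \<F> v = {}" if "v \<in> U" for v
      unfolding members_containing_def using that by blast
    show ?thesis
      by (rule that[OF U]) (simp add: none U(2))
  qed
qed

lemma openin_fibre_members_containing:
  assumes "discrete_family X \<F>" and "\<And>B. B \<in> \<F> \<Longrightarrow> openin X B \<and> closedin X B"
  shows "openin X {w \<in> topspace X. members_containing \<F> w = members_containing \<F> z}"
  unfolding openin_subopen[of X "{w \<in> topspace X. members_containing \<F> w = members_containing \<F> z}"]
proof
  fix x assume x: "x \<in> {w \<in> topspace X. members_containing \<F> w = members_containing \<F> z}"
  then obtain N where N: "openin X N" "x \<in> N"
    and same: "\<And>v. v \<in> N \<Longrightarrow> members_containing \<F> v = members_containing \<F> x"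
    using locally_constant_members_containing[OF assms] by blast
  have "N \<subseteq> {w \<in> topspace X. members_containing \<F> w = members_containing \<F> z}"
    using openin_subset[OF N(1)] same x by auto
  with N show "\<exists>N. openin X N \<and> x \<in> N \<and>
      N \<subseteq> {w \<in> topspace X. members_containing \<F> w = members_containing \<F> z}"
    by blast
qed

lemma fibre_members_containing_subset:
  "\<lbrakk>B \<in> \<F>; x \<in> B\<rbrakk> \<Longrightarrow> {w \<in> S. members_containing \<F> w = members_containing \<F> x} \<subseteq> B"
  by (auto simp: members_containing_def)

lemma is_baseE:
  assumes "is_base X \<B>" and "openin X U" and "x \<in> U"
  obtains B where "B \<in> \<B>" "x \<in> B" "B \<subseteq> U"
  using assms unfolding is_base_def by blast

lemma members_containing_separate_points:
  assumes "t1_space X" and "is_base X (\<Union>i\<in>I. \<B> i)"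
    and "x \<in> topspace X" and "y \<in> topspace X" and "x \<noteq> y"
  shows "\<exists>i\<in>I. members_containing (\<B> i) x \<noteq> members_containing (\<B> i) y"
proof -
  obtain U where "openin X U" "x \<in> U" "y \<notin> U"
    using assms(1,3-5) unfolding t1_space_def by blast
  then obtain B where "B \<in> (\<Union>i\<in>I. \<B> i)" "x \<in> B" "B \<subseteq> U"
    using is_baseE[OF assms(2)] by blast
  then obtain i where "i \<in> I" "B \<in> \<B> i"
    by blast
  then have "B \<in> members_containing (\<B> i) x" "B \<notin> members_containing (\<B> i) y"
    using \<open>x \<in> B\<close> \<open>B \<subseteq> U\<close> \<open>y \<notin> U\<close> by (auto simp: members_containing_def)
  with \<open>i \<in> I\<close> show ?thesis
    by blast
qed

lemma (in lex_keys) openin_block: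
  assumes T: "T = topspace X" and i: "i \<in> Field W" and small: "|underS W i| <o P_number X"
    and fibre: "\<And>j. j \<in> Field W \<Longrightarrow> openin X {w \<in> T. key j w = key j z}"
  shows "openin X (block i z)"
proof -
  let ?fibre = "\<lambda>j. {w \<in> T. key j w = key j z}"
  have "openin X (topspace X \<inter> (\<Inter>j\<in>underS W i. ?fibre j))"
  proof (rule openin_Inter_ordLess_P_number)
    show "|?fibre ` underS W i| <o P_number X"
      using ordLeq_ordLess_trans[OF card_of_image small] .
    show "openin X U" if "U \<in> ?fibre ` underS W i" for U
      using that fibre[OF underS_Field] by blast
  qed
  then have "openin X (T \<inter> (\<Inter>j\<in>underS W i. ?fibre j))"
    by (simp only: T)
  then have "openin X ((T \<inter> (\<Inter>j\<in>underS W i. ?fibre j)) \<inter> ?fibre i)"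
    using fibre[OF i] by (rule openin_Int)
  then show ?thesis
    by (simp only: block_eq_Inter[OF i])
qed

lemma (in lex_keys) block_base:
  assumes "is_base X (\<Union>i\<in>Field W. \<B> i)"
    and "\<And>i B x. \<lbrakk>i \<in> Field W; B \<in> \<B> i; x \<in> B\<rbrakk> \<Longrightarrow> {w \<in> T. key i w = key i x} \<subseteq> B"
    and "openin X U" and "x \<in> U"
  shows "\<exists>i\<in>Field W. block i x \<subseteq> U"
proof -
  obtain B where "B \<in> (\<Union>i\<in>Field W. \<B> i)" "x \<in> B" "B \<subseteq> U"
    by (rule is_baseE[OF assms(1,3,4)])
  then obtain i where i: "i \<in> Field W" and "B \<in> \<B> i"
    by blast
  have "block i x \<subseteq> {w \<in> T. key i w = key i x}"
    by (rule block_subset_fibre[OF i])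
  also have "\<dots> \<subseteq> B"
    by (rule assms(2)) fact+
  finally show ?thesis
    using i \<open>B \<subseteq> U\<close> by blast
qed

theorem theorem2p1:
  fixes X :: "'a topology" and I :: "'i set" and \<B> :: "'i \<Rightarrow> 'a set set"
  assumes "Tychonoff_space X"
    and "(card_of I, P_number X) \<in> ordLeq"
    and "is_base X (\<Union>i\<in>I. \<B> i)"
    and "\<forall>i\<in>I. \<forall>B\<in>\<B> i. openin X B \<and> closedin X B"
    and "\<forall>i\<in>I. discrete_family X (\<B> i)"
  shows "GO_space X"
proof -
  define key where "key i = members_containing (\<B> i)" for i
  have t1: "t1_space X"
    using assms(1) unfolding Tychonoff_space_def by blast
  interpret lex_keys "|I|" "topspace X" key "|UNIV :: 'a set set set|"
  proof
    show "Well_order |I|"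
      by (rule card_of_Well_order)
    show "linear_order_on UNIV |UNIV :: 'a set set set|"
      using card_of_well_order_on[of "UNIV :: 'a set set set"] unfolding well_order_on_def ..
  qed (use members_containing_separate_points[OF t1 assms(3)] in \<open>simp add: key_def Field_card_of\<close>)
  have "convex_ordered_space X lex_order"
  proof (rule convex_ordered_space_lex_order[OF refl])
    show "openin X (block i z)" if i: "i \<in> Field |I|" for i z
    proof (rule openin_block[OF refl i])
      show "|underS |I| i| <o P_number X"
        using ordLess_ordLeq_trans[OF card_of_underS[OF card_of_Card_order i] assms(2)] .
      show "openin X {w \<in> topspace X. key j w = key j z}" if "j \<in> Field |I|" for j
        unfolding key_def
        by (rule openin_fibre_members_containing) (use assms(4,5) that in \<open>auto simp: Field_card_of\<close>)
    qed
    show "\<exists>i\<in>Field |I|. block i x \<subseteq> U" if "openin X U" "x \<in> U" for U x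
      by (rule block_base) (use assms(3) that fibre_members_containing_subset in \<open>simp_all add: Field_card_of key_def\<close>)
  qed
  then show ?thesis
    by (rule convex_ordered_space.GO_space)
qed

end
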